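(* Let $R$ be a compact Hausdorff unitary topological ring satisfying the first countability axiom, and let $f:M\to N$ be a continuous homomorphism of complete totally disconnected $R$-modules. Then $f$ is strict if and only if $f(M)$ is closed in $N$.
   Context: A complete totally disconnected (t.d.) $R$-module is a Hausdorff, complete topological left $R$-module $M$ which has a basis of neighbourhoods of $0$ consisting of open submodules and which satisfies the second countability axiom. A continuous $R$-linear homomorphism $f:M\to N$ is called strict if the induced bijection $M/\ker(f)\to f(M)$ is a homeomorphism, where $M/\ker f$ carries the quotient topology and $f(M)$ the subspace topology of $N$. *)

theory Defs
  imports "HOL-Analysis.Analysis" "HOL-Algebra.Algebra"
begin

definition left_module :: "('r, 'x) ring_scheme \<Rightarrow> ('r, 'm) module \<Rightarrow> bool" where
  "left_module R M \<longleftrightarrow> ring R \<and> abelian_group M \<and>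
     (\<forall>a\<in>carrier R. \<forall>x\<in>carrier M. a \<odot>\<^bsub>M\<^esub> x \<in> carrier M) \<and>
     (\<forall>a\<in>carrier R. \<forall>b\<in>carrier R. \<forall>x\<in>carrier M.
        (a \<oplus>\<^bsub>R\<^esub> b) \<odot>\<^bsub>M\<^esub> x = a \<odot>\<^bsub>M\<^esub> x \<oplus>\<^bsub>M\<^esub> b \<odot>\<^bsub>M\<^esub> x) \<and>
     (\<forall>a\<in>carrier R. \<forall>x\<in>carrier M. \<forall>y\<in>carrier M.
        a \<odot>\<^bsub>M\<^esub> (x \<oplus>\<^bsub>M\<^esub> y) = a \<odot>\<^bsub>M\<^esub> x \<oplus>\<^bsub>M\<^esub> a \<odot>\<^bsub>M\<^esub> y) \<and>
     (\<forall>a\<in>carrier R. \<forall>b\<in>carrier R. \<forall>x\<in>carrier M.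
        (a \<otimes>\<^bsub>R\<^esub> b) \<odot>\<^bsub>M\<^esub> x = a \<odot>\<^bsub>M\<^esub> (b \<odot>\<^bsub>M\<^esub> x)) \<and>
     (\<forall>x\<in>carrier M. \<one>\<^bsub>R\<^esub> \<odot>\<^bsub>M\<^esub> x = x)"

definition topological_ring :: "('r, 'x) ring_scheme \<Rightarrow> 'r topology \<Rightarrow> bool" where
  "topological_ring R TR \<longleftrightarrow> ring R \<and> topspace TR = carrier R \<and>
     continuous_map (prod_topology TR TR) TR (\<lambda>(a, b). a \<oplus>\<^bsub>R\<^esub> b) \<and>
     continuous_map TR TR (\<lambda>a. \<ominus>\<^bsub>R\<^esub> a) \<and>
     continuous_map (prod_topology TR TR) TR (\<lambda>(a, b). a \<otimes>\<^bsub>R\<^esub> b)"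

definition topological_module ::
  "('r, 'x) ring_scheme \<Rightarrow> 'r topology \<Rightarrow> ('r, 'm) module \<Rightarrow> 'm topology \<Rightarrow> bool" where
  "topological_module R TR M TM \<longleftrightarrow> left_module R M \<and> topspace TM = carrier M \<and>
     continuous_map (prod_topology TM TM) TM (\<lambda>(x, y). x \<oplus>\<^bsub>M\<^esub> y) \<and>
     continuous_map TM TM (\<lambda>x. \<ominus>\<^bsub>M\<^esub> x) \<and>
     continuous_map (prod_topology TR TM) TM (\<lambda>(a, x). a \<odot>\<^bsub>M\<^esub> x)"

definition complete_top_group :: "('m, 'x) ring_scheme \<Rightarrow> 'm topology \<Rightarrow> bool" where
  "complete_top_group M TM \<longleftrightarrow>
     (\<forall>F :: 'm filter. F \<noteq> bot \<and> eventually (\<lambda>x. x \<in> carrier M) F \<and>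
        (\<forall>U. openin TM U \<and> \<zero>\<^bsub>M\<^esub> \<in> U \<longrightarrow>
             eventually (\<lambda>(x, y). x \<ominus>\<^bsub>M\<^esub> y \<in> U) (F \<times>\<^sub>F F))
      \<longrightarrow> (\<exists>l. limitin TM id l F))"

definition complete_td_module ::
  "('r, 'x) ring_scheme \<Rightarrow> 'r topology \<Rightarrow> ('r, 'm) module \<Rightarrow> 'm topology \<Rightarrow> bool" where
  "complete_td_module R TR M TM \<longleftrightarrow>
     topological_module R TR M TM \<and> Hausdorff_space TM \<and> complete_top_group M TM \<and>
     (\<forall>U. openin TM U \<and> \<zero>\<^bsub>M\<^esub> \<in> U \<longrightarrow>
          (\<exists>V. openin TM V \<and> submodule V R M \<and> V \<subseteq> U)) \<and>
     second_countable TM"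

definition lmodule_hom ::
  "('r, 'x) ring_scheme \<Rightarrow> ('r, 'm) module \<Rightarrow> ('r, 'n) module \<Rightarrow> ('m \<Rightarrow> 'n) \<Rightarrow> bool" where
  "lmodule_hom R M N f \<longleftrightarrow> f \<in> carrier M \<rightarrow> carrier N \<and>
     (\<forall>x\<in>carrier M. \<forall>y\<in>carrier M. f (x \<oplus>\<^bsub>M\<^esub> y) = f x \<oplus>\<^bsub>N\<^esub> f y) \<and>
     (\<forall>a\<in>carrier R. \<forall>x\<in>carrier M. f (a \<odot>\<^bsub>M\<^esub> x) = a \<odot>\<^bsub>N\<^esub> f x)"

definition quotient_top :: "'a topology \<Rightarrow> 'a set set \<Rightarrow> 'a set topology" where
  "quotient_top T P = topology (\<lambda>U. U \<subseteq> P \<and> openin T (Union U))"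

text \<open>f : M \<rightarrow> N is strict if the induced bijection M/ker f \<rightarrow> f(M), K +> x \<mapsto> f x,
  is a homeomorphism (quotient topology on M/ker f, subspace topology on f(M)).\<close>
definition strict_hom ::
  "('r, 'm) module \<Rightarrow> 'm topology \<Rightarrow> ('r, 'n) module \<Rightarrow> 'n topology \<Rightarrow> ('m \<Rightarrow> 'n) \<Rightarrow> bool" where
  "strict_hom M TM N TN f \<longleftrightarrow>
     homeomorphic_map (quotient_top TM (A_RCOSETS M (a_kernel M N f)))
                      (subtopology TN (f ` carrier M))
                      (\<lambda>C. f (SOME x. x \<in> C))"

end

theory Submission
  imports Defs
begin

(*
  The classes of M / ker f are the fibres of f, so f is strict iff it is a quotient map onto
  f(M). For a homomorphism this means open onto f(M), because the saturation of an open set is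
  a union of translates of it. Fix decreasing sequences of open subgroups V n, W n forming bases
  at 0 in M and N. If f is open onto f(M), a point y of the closure of f(M) is approximated by
  images f(x n) whose consecutive differences lift to elements of V n; the partial sums of the
  lifts converge in the complete group M to a preimage of y. Conversely, if f(M) is closed it is
  complete, and each V j has only countably many cosets; a Baire category argument shows that
  the closure of f(V j) contains a neighbourhood of 0 in f(M), and successive approximation
  removes the closure.
*)

context abelian_group
begin

lemma add_minus_cancel_left: "x \<in> carrier G \<Longrightarrow> y \<in> carrier G \<Longrightarrow> x \<oplus> (y \<oplus> \<ominus> x) = y"
  by (simp add: a_comm[of y] r_neg2)

lemma add_add_minus_cancel_left:
  "x \<in> carrier G \<Longrightarrow> y \<in> carrier G \<Longrightarrow> z \<in> carrier G \<Longrightarrow> x \<oplus> (y \<oplus> (z \<oplus> \<ominus> x)) = y \<oplus> z"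
  using add_minus_cancel_left[of x "y \<oplus> z"] by (simp add: a_assoc)

lemma a_minus_self [simp]: "x \<in> carrier G \<Longrightarrow> x \<ominus> x = \<zero>"
  by (simp add: a_minus_def r_neg)

lemma a_minus_zero [simp]: "x \<in> carrier G \<Longrightarrow> x \<ominus> \<zero> = x"
  by (simp add: a_minus_def)

lemmas a_minus_simps = a_minus_def a_ac minus_add r_neg l_neg r_neg1 r_neg2
  add_minus_cancel_left add_add_minus_cancel_left

lemma additive_subgroup_minusI:
  assumes "H \<subseteq> carrier G" "\<zero> \<in> H" "\<And>x y. x \<in> H \<Longrightarrow> y \<in> H \<Longrightarrow> x \<ominus> y \<in> H"
  shows "additive_subgroup H G"
proof -
  have inv: "\<ominus> x \<in> H" if "x \<in> H" for x
    using assms(3)[OF assms(2) that] that assms(1) by (auto simp: a_minus_def)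
  have "x \<oplus> y \<in> H" if "x \<in> H" "y \<in> H" for x y
    using assms(3)[OF that(1) inv[OF that(2)]] that assms(1) by (auto simp: a_minus_def)
  with inv assms(1,2) show ?thesis
    unfolding additive_subgroup_def
    by (intro group.subgroupI[OF a_group]) (auto simp flip: a_inv_def)
qed

lemma additive_subgroup_carrier: "additive_subgroup (carrier G) G"
  by (rule additive_subgroup_minusI) auto

end

lemma (in additive_subgroup) a_minus_closed: "x \<in> H \<Longrightarrow> y \<in> H \<Longrightarrow> x \<ominus> y \<in> H"
  by (simp add: a_minus_def)

section \<open>Quotient topology on the fibres of a map\<close>

definition fibres :: "'a topology \<Rightarrow> ('a \<Rightarrow> 'b) \<Rightarrow> 'a set set" where
  "fibres T f = (\<lambda>x. {y \<in> topspace T. f y = f x}) ` topspace T"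

lemma fibres_disjoint: "C \<in> fibres T f \<Longrightarrow> D \<in> fibres T f \<Longrightarrow> z \<in> C \<Longrightarrow> z \<in> D \<Longrightarrow> C = D"
  by (auto simp: fibres_def)

lemma openin_quotient_top_fibres:
  "openin (quotient_top T (fibres T f)) U \<longleftrightarrow> U \<subseteq> fibres T f \<and> openin T (\<Union>U)"
proof -
  have Int: "\<Union>(A \<inter> B) = \<Union>A \<inter> \<Union>B" if "A \<subseteq> fibres T f" "B \<subseteq> fibres T f" for A B
    using that fibres_disjoint[of _ T f] by blast
  have Union: "\<Union>(\<Union>\<K>) = \<Union>(Union ` \<K>)" for \<K> :: "'a set set set"
    by blast
  have "istopology (\<lambda>U. U \<subseteq> fibres T f \<and> openin T (\<Union>U))"
    unfolding istopology_def Union by (auto simp: Int)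
  then show ?thesis
    by (simp add: quotient_top_def)
qed

lemma topspace_quotient_top_fibres: "topspace (quotient_top T (fibres T f)) = fibres T f"
proof -
  have "\<Union>(fibres T f) = topspace T"
    by (auto simp: fibres_def)
  then have "openin (quotient_top T (fibres T f)) (fibres T f)"
    by (simp add: openin_quotient_top_fibres)
  then show ?thesis
    by (auto simp: topspace_def openin_quotient_top_fibres)
qed

lemma quotient_map_fibre:
  "quotient_map T (quotient_top T (fibres T f)) (\<lambda>x. {y \<in> topspace T. f y = f x})"
  unfolding quotient_map_def topspace_quotient_top_fibres
proof (intro conjI allI impI)
  show "(\<lambda>x. {y \<in> topspace T. f y = f x}) ` topspace T = fibres T f"
    by (simp add: fibres_def)
  fix U assume "U \<subseteq> fibres T f"
  then have "{x \<in> topspace T. {y \<in> topspace T. f y = f x} \<in> U} = \<Union>U"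
    by (auto simp: fibres_def)
  then show "openin T {x \<in> topspace T. {y \<in> topspace T. f y = f x} \<in> U} \<longleftrightarrow>
      openin (quotient_top T (fibres T f)) U"
    using \<open>U \<subseteq> fibres T f\<close> by (simp add: openin_quotient_top_fibres)
qed

lemma homeomorphic_map_fibres_iff_quotient_map:
  "homeomorphic_map (quotient_top T (fibres T f)) T' (\<lambda>C. f (SOME x. x \<in> C)) \<longleftrightarrow> quotient_map T T' f"
proof -
  let ?\<pi> = "\<lambda>x. {y \<in> topspace T. f y = f x}" and ?\<phi> = "\<lambda>C. f (SOME x. x \<in> C)"
  have \<phi>_\<pi>: "?\<phi> (?\<pi> x) = f x" if "x \<in> topspace T" for x
    using someI[of "\<lambda>y. y \<in> ?\<pi> x" x] that by simp
  have "inj_on ?\<phi> (fibres T f)"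
    unfolding inj_on_def fibres_def by (auto simp only: image_iff \<phi>_\<pi>)
  moreover have "quotient_map T T' f \<longleftrightarrow> quotient_map T T' (?\<phi> \<circ> ?\<pi>)"
    by (rule iffI; erule quotient_map_eq) (simp_all add: \<phi>_\<pi>[simplified])
  ultimately show ?thesis
    by (simp add: homeomorphic_map_def topspace_quotient_top_fibres quotient_map_compose_eq[OF quotient_map_fibre])
qed

section \<open>Complete groups with a countable basis of open subgroups\<close>

locale complete_td_group = abelian_group G for G (structure) +
  fixes T :: "'a topology"
  assumes topspace_eq: "topspace T = carrier G"
    and continuous_add: "continuous_map (prod_topology T T) T (\<lambda>(x, y). x \<oplus> y)"
    and Hausdorff: "Hausdorff_space T"
    and complete: "complete_top_group G T"
    and open_subgroup_nhds: "\<And>U. openin T U \<Longrightarrow> \<zero> \<in> U \<Longrightarrow> \<exists>H. openin T H \<and> additive_subgroup H G \<and> H \<subseteq> U"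
    and second_countable: "second_countable T"
begin

lemma continuous_map_add_left: "a \<in> carrier G \<Longrightarrow> continuous_map T T (\<lambda>x. a \<oplus> x)"
  using continuous_map_compose[OF continuous_map_pairedI continuous_add, of T "\<lambda>_. a" id]
  by (simp add: o_def topspace_eq)

lemma openin_add_left_preimage:
  "openin T U \<Longrightarrow> a \<in> carrier G \<Longrightarrow> openin T {x \<in> carrier G. a \<oplus> x \<in> U}"
  using openin_continuous_map_preimage[OF continuous_map_add_left] by (metis topspace_eq)

lemma openin_minus_preimage:
  assumes "openin T U" "a \<in> carrier G"
  shows "openin T {x \<in> carrier G. x \<ominus> a \<in> U}"
proof -
  have "{x \<in> carrier G. x \<ominus> a \<in> U} = {x \<in> carrier G. \<ominus> a \<oplus> x \<in> U}"
    using assms(2) by (auto simp: a_minus_def a_comm)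
  then show ?thesis
    using openin_add_left_preimage assms by simp
qed

lemma open_subgroup_closedin:
  assumes "openin T H" "additive_subgroup H G"
  shows "closedin T H"
proof -
  interpret H: additive_subgroup H G by fact
  have "topspace T - H = (\<Union>a\<in>carrier G - H. {x \<in> carrier G. x \<ominus> a \<in> H})" (is "_ = ?U")
  proof
    show "topspace T - H \<subseteq> ?U"
    proof
      fix x assume "x \<in> topspace T - H"
      then have "x \<in> carrier G - H" "x \<ominus> x \<in> H"
        by (auto simp: topspace_eq a_minus_def r_neg)
      then show "x \<in> ?U"
        by blast
    qed
    show "?U \<subseteq> topspace T - H"
    proof safe
      fix x a assume "x \<in> carrier G" "a \<in> carrier G" "a \<notin> H" "x \<ominus> a \<in> H" "x \<in> H"
      have "x \<ominus> (x \<ominus> a) \<in> H"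
        using \<open>x \<in> H\<close> \<open>x \<ominus> a \<in> H\<close> by (rule H.a_minus_closed)
      moreover have "x \<ominus> (x \<ominus> a) = a"
        using \<open>x \<in> carrier G\<close> \<open>a \<in> carrier G\<close> by (simp add: a_minus_simps)
      ultimately show False
        using \<open>a \<notin> H\<close> by simp
    qed (simp add: topspace_eq)
  qed
  moreover have "openin T (\<Union>a\<in>carrier G - H. {x \<in> carrier G. x \<ominus> a \<in> H})"
    using assms(1) by (auto intro: openin_minus_preimage)
  ultimately show ?thesis
    using H.a_subset by (simp add: closedin_def topspace_eq)
qed

definition subgroup_nhds_basis :: "(nat \<Rightarrow> 'a set) \<Rightarrow> bool" where
  "subgroup_nhds_basis V \<longleftrightarrow>
     (\<forall>n. openin T (V n) \<and> additive_subgroup (V n) G \<and> V (Suc n) \<subseteq> V n) \<and>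
     (\<forall>U. openin T U \<and> \<zero> \<in> U \<longrightarrow> (\<exists>n. V n \<subseteq> U))"

context
  fixes V assumes V: "subgroup_nhds_basis V"
begin

lemma basis_openin: "openin T (V n)"
  and basis_subgroup: "additive_subgroup (V n) G"
  and basis_nhds: "openin T U \<Longrightarrow> \<zero> \<in> U \<Longrightarrow> \<exists>n. V n \<subseteq> U"
  using V by (auto simp: subgroup_nhds_basis_def)

lemma basis_subset: "V n \<subseteq> carrier G"
  using additive_subgroup.a_subset[OF basis_subgroup] .

lemma basis_zero: "\<zero> \<in> V n"
  using additive_subgroup.zero_closed[OF basis_subgroup] .

lemma basis_minus_closed: "x \<in> V n \<Longrightarrow> y \<in> V n \<Longrightarrow> x \<ominus> y \<in> V n"
  using additive_subgroup.a_minus_closed[OF basis_subgroup] .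

lemma basis_antimono: "m \<le> n \<Longrightarrow> V n \<subseteq> V m"
  by (rule lift_Suc_antimono_le[of V]) (use V in \<open>simp add: subgroup_nhds_basis_def\<close>)

lemma basis_reindex:
  assumes "\<And>i. k i \<le> k (Suc i)" "\<And>i. i \<le> k i"
  shows "subgroup_nhds_basis (\<lambda>i. V (k i))"
  unfolding subgroup_nhds_basis_def
proof (intro conjI allI impI)
  fix n
  show "openin T (V (k n))" "additive_subgroup (V (k n)) G" "V (k (Suc n)) \<subseteq> V (k n)"
    using basis_openin basis_subgroup basis_antimono[OF assms(1)] by auto
next
  fix U assume "openin T U \<and> \<zero> \<in> U"
  then obtain n where "V n \<subseteq> U"
    using basis_nhds by blast
  then show "\<exists>i. V (k i) \<subseteq> U"
    using basis_antimono[OF assms(2)] by blast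
qed

lemma limitin_iff_basis:
  assumes "l \<in> carrier G" "\<And>m. s m \<in> carrier G"
  shows "limitin T s l F \<longleftrightarrow> (\<forall>n. eventually (\<lambda>m. s m \<ominus> l \<in> V n) F)"
proof
  assume lim: "limitin T s l F"
  show "\<forall>n. eventually (\<lambda>m. s m \<ominus> l \<in> V n) F"
  proof
    fix n
    have "openin T {x \<in> carrier G. x \<ominus> l \<in> V n}" "l \<in> {x \<in> carrier G. x \<ominus> l \<in> V n}"
      using openin_minus_preimage[OF basis_openin assms(1)] assms(1) basis_zero by (simp_all add: r_neg a_minus_def)
    then show "eventually (\<lambda>m. s m \<ominus> l \<in> V n) F"
      using lim unfolding limitin_def by (auto elim: eventually_mono)
  qed
next
  assume ev: "\<forall>n. eventually (\<lambda>m. s m \<ominus> l \<in> V n) F"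
  show "limitin T s l F"
    unfolding limitin_def
  proof (intro conjI allI impI)
    fix U assume "openin T U \<and> l \<in> U"
    then have "openin T {x \<in> carrier G. l \<oplus> x \<in> U}" "\<zero> \<in> {x \<in> carrier G. l \<oplus> x \<in> U}"
      using assms(1) by (auto intro: openin_add_left_preimage)
    then obtain n where "V n \<subseteq> {x \<in> carrier G. l \<oplus> x \<in> U}"
      using basis_nhds by blast
    show "eventually (\<lambda>m. s m \<in> U) F"
      using ev[rule_format, of n]
    proof (rule eventually_mono)
      fix m assume "s m \<ominus> l \<in> V n"
      with \<open>V n \<subseteq> _\<close> have "l \<oplus> (s m \<ominus> l) \<in> U"
        by blast
      then show "s m \<in> U"
        using assms by (simp add: a_minus_simps)
    qed
  qed (use assms in \<open>simp add: topspace_eq\<close>)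
qed

lemma closure_of_iff_basis:
  assumes "S \<subseteq> carrier G"
  shows "y \<in> T closure_of S \<longleftrightarrow> y \<in> carrier G \<and> (\<forall>n. \<exists>s\<in>S. s \<ominus> y \<in> V n)"
proof (cases "y \<in> carrier G")
  case y: True
  have "(\<forall>U. y \<in> U \<and> openin T U \<longrightarrow> (\<exists>s. s \<in> S \<and> s \<in> U)) \<longleftrightarrow> (\<forall>n. \<exists>s\<in>S. s \<ominus> y \<in> V n)"
  proof safe
    fix n
    assume near: "\<forall>U. y \<in> U \<and> openin T U \<longrightarrow> (\<exists>s. s \<in> S \<and> s \<in> U)"
    have "openin T {x \<in> carrier G. x \<ominus> y \<in> V n}" "y \<in> {x \<in> carrier G. x \<ominus> y \<in> V n}"
      using openin_minus_preimage[OF basis_openin y] y basis_zero by (simp_all add: r_neg a_minus_def)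
    then show "\<exists>s\<in>S. s \<ominus> y \<in> V n"
      using near[rule_format, of "{x \<in> carrier G. x \<ominus> y \<in> V n}"] by auto
  next
    fix U assume near: "\<forall>n. \<exists>s\<in>S. s \<ominus> y \<in> V n" and "y \<in> U" "openin T U"
    then have "openin T {x \<in> carrier G. y \<oplus> x \<in> U}" "\<zero> \<in> {x \<in> carrier G. y \<oplus> x \<in> U}"
      using y by (auto intro: openin_add_left_preimage)
    then obtain n where "V n \<subseteq> {x \<in> carrier G. y \<oplus> x \<in> U}"
      using basis_nhds by blast
    moreover obtain s where "s \<in> S" "s \<ominus> y \<in> V n"
      using near by blast
    ultimately have "y \<oplus> (s \<ominus> y) \<in> U"
      by blast
    moreover have "y \<oplus> (s \<ominus> y) = s"
      using y \<open>s \<in> S\<close> assms by (auto simp: a_minus_simps)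
    ultimately show "\<exists>s. s \<in> S \<and> s \<in> U"
      using \<open>s \<in> S\<close> by auto
  qed
  then show ?thesis
    using y by (simp add: in_closure_of topspace_eq)
qed (simp add: in_closure_of topspace_eq)

lemma basis_steps_telescope:
  assumes "\<And>n. s n \<in> carrier G" "\<And>n. s (Suc n) \<ominus> s n \<in> V n" "n \<le> m"
  shows "s m \<ominus> s n \<in> V n"
  using assms(3)
proof (induction m rule: dec_induct)
  case base
  show ?case
    using assms(1) basis_zero by (simp add: a_minus_simps)
next
  case (step m)
  have "s (Suc m) \<ominus> s m \<in> V n"
    using assms(2) basis_antimono[OF step(1)] by blast
  then have "(s (Suc m) \<ominus> s m) \<oplus> (s m \<ominus> s n) \<in> V n"
    using step(3) by (rule additive_subgroup.a_closed[OF basis_subgroup])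
  then show ?case
    using assms(1) by (simp add: a_minus_simps)
qed

lemma basis_steps_Cauchy:
  assumes "\<And>n. s n \<in> carrier G" "\<And>n. s (Suc n) \<ominus> s n \<in> V n" and U: "openin T U" "\<zero> \<in> U"
  shows "\<forall>\<^sub>F (x, y) in filtermap s sequentially \<times>\<^sub>F filtermap s sequentially. x \<ominus> y \<in> U"
proof -
  obtain n where "V n \<subseteq> U"
    using basis_nhds[OF U] by blast
  moreover have "s i \<ominus> s j \<in> V n" if "n \<le> i" "n \<le> j" for i j
  proof -
    have "(s i \<ominus> s n) \<ominus> (s j \<ominus> s n) \<in> V n"
      using basis_minus_closed[OF basis_steps_telescope[OF assms(1,2) that(1)]
          basis_steps_telescope[OF assms(1,2) that(2)]] .
    then show ?thesis
      using assms(1) by (simp add: a_minus_simps)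
  qed
  ultimately have tail: "\<forall>x y. (\<exists>i\<ge>n. x = s i) \<longrightarrow> (\<exists>j\<ge>n. y = s j) \<longrightarrow> x \<ominus> y \<in> U"
    by blast
  have "eventually (\<lambda>x. \<exists>i\<ge>n. x = s i) (filtermap s sequentially)"
    unfolding eventually_filtermap eventually_sequentially by blast
  then show ?thesis
    unfolding eventually_prod_filter using tail by blast
qed

lemma basis_steps_converge:
  assumes "\<And>n. s n \<in> carrier G" "\<And>n. s (Suc n) \<ominus> s n \<in> V n"
  shows "\<exists>l\<in>carrier G. limitin T s l sequentially \<and> (\<forall>n. l \<ominus> s n \<in> V n)"
proof -
  define F where "F = filtermap s sequentially"
  have "\<forall>\<^sub>F (x, y) in F \<times>\<^sub>F F. x \<ominus> y \<in> U" if "openin T U" "\<zero> \<in> U" for U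
    unfolding F_def using basis_steps_Cauchy[OF assms that] .
  moreover have "F \<noteq> bot" "\<forall>\<^sub>F x in F. x \<in> carrier G"
    by (simp_all add: F_def filtermap_bot_iff eventually_filtermap assms(1))
  ultimately obtain l where "limitin T id l F"
    using complete unfolding complete_top_group_def by blast
  then have lim: "limitin T s l sequentially" and l: "l \<in> carrier G"
    by (simp_all add: limitin_def F_def eventually_filtermap topspace_eq)
  have "l \<ominus> s n \<in> V n" for n
  proof -
    have "\<ominus> s n \<oplus> x = x \<ominus> s n" if "x \<in> carrier G" for x
      using that assms(1) by (simp add: a_minus_def a_comm)
    then have "limitin T (\<lambda>m. s m \<ominus> s n) (l \<ominus> s n) sequentially"
      using continuous_map_limit[OF continuous_map_add_left[of "\<ominus> s n"] lim] assms(1) l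
      by (simp add: o_def)
    moreover have "\<forall>\<^sub>F m in sequentially. s m \<ominus> s n \<in> V n"
      unfolding eventually_sequentially using basis_steps_telescope[OF assms] by blast
    ultimately show ?thesis
      using open_subgroup_closedin[OF basis_openin basis_subgroup] trivial_limit_sequentially
      by (metis limitin_closedin)
  qed
  with l lim show ?thesis
    by blast
qed

end

lemma countable_nhds_base_zero:
  obtains B :: "nat \<Rightarrow> 'a set"
  where "\<And>n. openin T (B n)" "\<And>n. \<zero> \<in> B n" "\<And>U. openin T U \<Longrightarrow> \<zero> \<in> U \<Longrightarrow> \<exists>n. B n \<subseteq> U"
proof -
  obtain \<B> where \<B>: "countable \<B>" "\<And>B. B \<in> \<B> \<Longrightarrow> openin T B"
    "\<And>U x. openin T U \<Longrightarrow> x \<in> U \<Longrightarrow> \<exists>B\<in>\<B>. x \<in> B \<and> B \<subseteq> U"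
    using second_countable unfolding second_countable_def by metis
  define \<B>\<^sub>0 where "\<B>\<^sub>0 = {B \<in> \<B>. \<zero> \<in> B}"
  have "\<B>\<^sub>0 \<noteq> {}" "countable \<B>\<^sub>0"
    using \<B>(1) \<B>(3)[OF openin_topspace, of \<zero>] by (auto simp: \<B>\<^sub>0_def topspace_eq)
  show thesis
  proof (rule that[of "from_nat_into \<B>\<^sub>0"])
    show "openin T (from_nat_into \<B>\<^sub>0 n)" "\<zero> \<in> from_nat_into \<B>\<^sub>0 n" for n
      using from_nat_into[OF \<open>\<B>\<^sub>0 \<noteq> {}\<close>] \<B>(2) by (auto simp: \<B>\<^sub>0_def)
    fix U assume "openin T U" "\<zero> \<in> U"
    then obtain C where "C \<in> \<B>\<^sub>0" "C \<subseteq> U"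
      using \<B>(3)[of U \<zero>] by (auto simp: \<B>\<^sub>0_def)
    then show "\<exists>n. from_nat_into \<B>\<^sub>0 n \<subseteq> U"
      using from_nat_into_surj[OF \<open>countable \<B>\<^sub>0\<close>] by metis
  qed
qed

lemma subgroup_nhds_basis_exists: "\<exists>V. subgroup_nhds_basis V"
proof -
  obtain B :: "nat \<Rightarrow> 'a set" where B: "\<And>n. openin T (B n)" "\<And>n. \<zero> \<in> B n"
    and B_nhds: "\<And>U. openin T U \<Longrightarrow> \<zero> \<in> U \<Longrightarrow> \<exists>n. B n \<subseteq> U"
    using countable_nhds_base_zero by blast
  define shrink where "shrink U = (SOME H. openin T H \<and> additive_subgroup H G \<and> H \<subseteq> U)" for U
  have shrink: "openin T (shrink U)" "additive_subgroup (shrink U) G" "shrink U \<subseteq> U"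
    if "openin T U" "\<zero> \<in> U" for U
    using someI_ex[OF open_subgroup_nhds[OF that]] by (simp_all add: shrink_def)
  define V where "V = rec_nat (shrink (B 0)) (\<lambda>n Vn. shrink (B (Suc n) \<inter> Vn))"
  have V0: "V 0 = shrink (B 0)" and VSuc: "V (Suc n) = shrink (B (Suc n) \<inter> V n)" for n
    by (simp_all add: V_def)
  have V: "openin T (V n) \<and> additive_subgroup (V n) G \<and> V n \<subseteq> B n" for n
  proof (induction n)
    case 0
    show ?case
      using shrink[OF B] by (simp add: V0)
  next
    case (Suc n)
    then have "openin T (B (Suc n) \<inter> V n)" "\<zero> \<in> B (Suc n) \<inter> V n"
      using B additive_subgroup.zero_closed by auto
    from shrink[OF this] show ?case
      by (simp add: VSuc)
  qed
  have "V (Suc n) \<subseteq> V n" for n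
  proof -
    have "openin T (B (Suc n) \<inter> V n)" "\<zero> \<in> B (Suc n) \<inter> V n"
      using B V[of n] additive_subgroup.zero_closed[of "V n" G] by auto
    from shrink(3)[OF this] show ?thesis
      by (simp add: VSuc)
  qed
  moreover have "\<exists>n. V n \<subseteq> U" if "openin T U" "\<zero> \<in> U" for U
    using B_nhds[OF that] V by blast
  ultimately show ?thesis
    using V unfolding subgroup_nhds_basis_def by blast
qed

lemma additive_subgroup_closure_of:
  assumes "additive_subgroup H G"
  shows "additive_subgroup (T closure_of H) G"
proof -
  interpret H: additive_subgroup H G by fact
  obtain V where V: "subgroup_nhds_basis V"
    using subgroup_nhds_basis_exists by blast
  note closure = closure_of_iff_basis[OF V H.a_subset]
  show ?thesis
  proof (rule additive_subgroup_minusI)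
    show "T closure_of H \<subseteq> carrier G"
      by (simp add: closure_of_subset_topspace flip: topspace_eq)
    have "\<zero> \<ominus> \<zero> \<in> V n" for n
      using basis_zero[OF V] by (simp add: r_neg a_minus_def)
    then show "\<zero> \<in> T closure_of H"
      unfolding closure using H.zero_closed by blast
  next
    fix x y assume "x \<in> T closure_of H" "y \<in> T closure_of H"
    then have xy: "x \<in> carrier G" "y \<in> carrier G"
      and near: "\<And>n. \<exists>a\<in>H. a \<ominus> x \<in> V n" "\<And>n. \<exists>b\<in>H. b \<ominus> y \<in> V n"
      unfolding closure by auto
    have "\<exists>c\<in>H. c \<ominus> (x \<ominus> y) \<in> V n" for n
    proof -
      obtain a b where ab: "a \<in> H" "b \<in> H" "a \<ominus> x \<in> V n" "b \<ominus> y \<in> V n"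
        using near by metis
      from ab(3,4) have "(a \<ominus> x) \<ominus> (b \<ominus> y) \<in> V n"
        by (rule basis_minus_closed[OF V])
      moreover have "(a \<ominus> x) \<ominus> (b \<ominus> y) = (a \<ominus> b) \<ominus> (x \<ominus> y)"
        using ab(1,2) H.a_subset xy by (auto simp: a_minus_simps)
      ultimately show ?thesis
        using ab(1,2) H.a_minus_closed by metis
    qed
    then show "x \<ominus> y \<in> T closure_of H"
      unfolding closure using xy by simp
  qed
qed

lemma countable_cosets:
  assumes "openin T H" "additive_subgroup H G"
  obtains a :: "nat \<Rightarrow> 'a" where "\<And>i. a i \<in> carrier G" "\<And>x. x \<in> carrier G \<Longrightarrow> \<exists>i. x \<ominus> a i \<in> H"
proof -
  define coset where "coset a = {x \<in> carrier G. x \<ominus> a \<in> H}" for a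
  have "x \<in> coset x" if "x \<in> carrier G" for x
    using that additive_subgroup.zero_closed[OF assms(2)] by (simp add: coset_def a_minus_def r_neg)
  then have cover: "\<Union>(coset ` carrier G) = topspace T"
    by (auto simp: topspace_eq coset_def)
  have "openin T U" if "U \<in> coset ` carrier G" for U
    using that openin_minus_preimage[OF assms(1)] by (auto simp: coset_def)
  then have "\<exists>\<U>. countable \<U> \<and> \<U> \<subseteq> coset ` carrier G \<and> \<Union>\<U> = topspace T"
    by (rule Lindelof_spaceD[OF second_countable_imp_Lindelof_space[OF second_countable] _ cover])
  then obtain \<U> where "countable \<U>" "\<U> \<subseteq> coset ` carrier G" and \<U>: "\<Union>\<U> = topspace T"
    by auto
  then obtain A where "countable A" "A \<subseteq> carrier G" "\<U> = coset ` A"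
    using countable_subset_image[of \<U> coset "carrier G"] by auto
  with \<U> have A: "countable A" "A \<subseteq> carrier G" "\<Union>(coset ` A) = carrier G"
    by (simp_all add: topspace_eq)
  then have "A \<noteq> {}"
    using zero_closed by blast
  show thesis
  proof
    show "from_nat_into A i \<in> carrier G" for i
      using from_nat_into[OF \<open>A \<noteq> {}\<close>] A(2) by blast
    fix x assume "x \<in> carrier G"
    then obtain a where "a \<in> A" "x \<ominus> a \<in> H"
      using A(3) by (auto simp: coset_def)
    then show "\<exists>i. x \<ominus> from_nat_into A i \<in> H"
      using from_nat_into_surj[OF A(1)] by metis
  qed
qed

section \<open>A Baire category argument\<close>

context
  fixes V assumes V: "subgroup_nhds_basis V"
begin

lemma basis_separates_closedin:
  assumes "closedin T D" "y \<in> carrier G" "y \<notin> D"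
  shows "\<exists>n. \<forall>w\<in>V n. y \<oplus> w \<notin> D"
proof -
  have D: "D \<subseteq> carrier G"
    using closedin_subset[OF assms(1)] by (simp add: topspace_eq)
  have "y \<notin> T closure_of D"
    using assms by (simp add: closure_of_closedin)
  then obtain n where n: "\<And>d. d \<in> D \<Longrightarrow> d \<ominus> y \<notin> V n"
    using assms(2) by (auto simp: closure_of_iff_basis[OF V D])
  have "y \<oplus> w \<notin> D" if "w \<in> V n" for w
  proof
    assume "y \<oplus> w \<in> D"
    moreover have "w \<in> carrier G"
      using that basis_subset[OF V] by blast
    then have "(y \<oplus> w) \<ominus> y = w"
      using assms(2) by (simp add: a_minus_simps)
    ultimately show False
      using n that by metis
  qed
  then show ?thesis
    by blast
qed

lemma exists_near_point_off_coset:
  assumes L: "additive_subgroup L G" and D: "additive_subgroup D G"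
    and k: "\<not> L \<inter> V k \<subseteq> D" and z: "z \<in> L" and c: "c \<in> carrier G"
  shows "\<exists>z'\<in>L. z' \<ominus> z \<in> V k \<and> z' \<ominus> c \<notin> D"
proof (cases "z \<ominus> c \<in> D")
  case False
  moreover have "z \<ominus> z \<in> V k"
    using z additive_subgroup.a_subset[OF L] basis_zero[OF V] by auto
  ultimately show ?thesis
    using z by blast
next
  case True
  obtain y where y: "y \<in> L" "y \<in> V k" "y \<notin> D"
    using k by blast
  have zc: "z \<in> carrier G" and yc: "y \<in> carrier G"
    using z y(1) additive_subgroup.a_subset[OF L] by auto
  have "(z \<oplus> y) \<ominus> c \<notin> D"
  proof
    assume "(z \<oplus> y) \<ominus> c \<in> D"
    then have "((z \<oplus> y) \<ominus> c) \<ominus> (z \<ominus> c) \<in> D"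
      using True by (rule additive_subgroup.a_minus_closed[OF D])
    moreover have "((z \<oplus> y) \<ominus> c) \<ominus> (z \<ominus> c) = y"
      using zc yc c by (simp add: a_minus_simps)
    ultimately show False
      using y(3) by simp
  qed
  moreover have "(z \<oplus> y) \<ominus> z = y" "z \<oplus> y \<in> L"
    using zc yc z y(1) by (simp_all add: a_minus_simps additive_subgroup.a_closed[OF L])
  ultimately show ?thesis
    using y(2) by (intro bexI[of _ "z \<oplus> y"]) simp_all
qed

lemma exists_near_ball_off_coset:
  assumes L: "additive_subgroup L G" and D: "closedin T D" "additive_subgroup D G"
    and k: "\<not> L \<inter> V k \<subseteq> D" and z: "z \<in> L" and c: "c \<in> carrier G"
  shows "\<exists>z'\<in>L. \<exists>n>k. z' \<ominus> z \<in> V k \<and> (\<forall>w\<in>V n. (z' \<oplus> w) \<ominus> c \<notin> D)"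
proof -
  obtain z' where z': "z' \<in> L" "z' \<ominus> z \<in> V k" "z' \<ominus> c \<notin> D"
    using exists_near_point_off_coset[OF L D(2) k z c] by blast
  have z'c: "z' \<in> carrier G"
    using z'(1) additive_subgroup.a_subset[OF L] by auto
  obtain n where n: "\<And>w. w \<in> V n \<Longrightarrow> (z' \<ominus> c) \<oplus> w \<notin> D"
    using basis_separates_closedin[OF D(1) _ z'(3)] z'c c by auto
  have "(z' \<oplus> w) \<ominus> c \<notin> D" if "w \<in> V (max n (Suc k))" for w
  proof -
    have w: "w \<in> V n" "w \<in> carrier G"
      using that basis_antimono[OF V, of n "max n (Suc k)"] basis_subset[OF V] by auto
    have "(z' \<oplus> w) \<ominus> c = (z' \<ominus> c) \<oplus> w"
      using z'c c w(2) by (simp add: a_minus_simps)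
    then show ?thesis
      using n[OF w(1)] by simp
  qed
  then show ?thesis
    using z'(1,2) by (intro bexI[of _ z'] exI[of _ "max n (Suc k)"]) auto
qed

(* Each z (Suc i) keeps a whole neighbourhood z (Suc i) + V (k (Suc i)) off the translate
   c i + D; that neighbourhood contains all later terms and hence the limit. *)
lemma escape_sequence:
  fixes c :: "nat \<Rightarrow> 'a"
  assumes L: "additive_subgroup L G" and D: "closedin T D" "additive_subgroup D G"
    and thin: "\<And>k. \<not> L \<inter> V k \<subseteq> D" and c: "\<And>i. c i \<in> carrier G"
  obtains z :: "nat \<Rightarrow> 'a" and k :: "nat \<Rightarrow> nat"
  where "\<And>i. z i \<in> L" "\<And>i. z (Suc i) \<ominus> z i \<in> V (k i)" "strict_mono k"
    "\<And>i w. w \<in> V (k (Suc i)) \<Longrightarrow> (z (Suc i) \<oplus> w) \<ominus> c i \<notin> D"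
proof -
  have "\<exists>g. \<forall>i. fst (g i) \<in> L \<and>
      fst (g (Suc i)) \<ominus> fst (g i) \<in> V (snd (g i)) \<and> snd (g i) < snd (g (Suc i)) \<and>
      (\<forall>w\<in>V (snd (g (Suc i))). (fst (g (Suc i)) \<oplus> w) \<ominus> c i \<notin> D)"
  proof (rule dependent_nat_choice)
    show "\<exists>p :: 'a \<times> nat. fst p \<in> L"
      using additive_subgroup.zero_closed[OF L] by auto
  next
    fix p :: "'a \<times> nat" and i assume "fst p \<in> L"
    then have "\<exists>z'\<in>L. \<exists>n>snd p. z' \<ominus> fst p \<in> V (snd p) \<and> (\<forall>w\<in>V n. (z' \<oplus> w) \<ominus> c i \<notin> D)"
      by (rule exists_near_ball_off_coset[OF L D thin _ c])
    then show "\<exists>p'. fst p' \<in> L \<and> fst p' \<ominus> fst p \<in> V (snd p) \<and> snd p < snd p' \<and>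
        (\<forall>w\<in>V (snd p'). (fst p' \<oplus> w) \<ominus> c i \<notin> D)"
      by force
  qed
  then obtain g where g: "\<forall>i. fst (g i) \<in> L \<and>
      fst (g (Suc i)) \<ominus> fst (g i) \<in> V (snd (g i)) \<and> snd (g i) < snd (g (Suc i)) \<and>
      (\<forall>w\<in>V (snd (g (Suc i))). (fst (g (Suc i)) \<oplus> w) \<ominus> c i \<notin> D)"
    by blast
  show thesis
    by (rule that[of "\<lambda>i. fst (g i)" "\<lambda>i. snd (g i)"]) (use g in \<open>auto simp: strict_mono_Suc_iff\<close>)
qed

theorem closed_subgroup_not_covered_by_cosets:
  fixes c :: "nat \<Rightarrow> 'a"
  assumes L: "closedin T L" "additive_subgroup L G"
    and D: "closedin T D" "additive_subgroup D G"
    and thin: "\<And>k. \<not> L \<inter> V k \<subseteq> D" and c: "\<And>i. c i \<in> L"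
  shows "\<exists>z\<in>L. \<forall>i. z \<ominus> c i \<notin> D"
proof -
  have cc: "c i \<in> carrier G" for i
    using c additive_subgroup.a_subset[OF L(2)] by blast
  obtain z :: "nat \<Rightarrow> 'a" and k :: "nat \<Rightarrow> nat" where zL: "\<And>i. z i \<in> L"
    and step: "\<And>i. z (Suc i) \<ominus> z i \<in> V (k i)" and k: "strict_mono k"
    and avoid: "\<And>i w. w \<in> V (k (Suc i)) \<Longrightarrow> (z (Suc i) \<oplus> w) \<ominus> c i \<notin> D"
    by (fact escape_sequence[where c = c, OF L(2) D thin cc])
  have W: "subgroup_nhds_basis (\<lambda>i. V (k i))"
    using k by (intro basis_reindex[OF V]) (simp_all add: strict_mono_less_eq strict_mono_imp_increasing)
  have zc: "z i \<in> carrier G" for i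
    using zL additive_subgroup.a_subset[OF L(2)] by auto
  obtain l where l: "l \<in> carrier G" "limitin T z l sequentially" "\<And>i. l \<ominus> z i \<in> V (k i)"
    using basis_steps_converge[OF W zc step] by blast
  have "l \<in> L"
    using limitin_closedin[OF l(2) L(1)] zL by simp
  moreover have "l \<ominus> c i \<notin> D" for i
  proof -
    have "z (Suc i) \<oplus> (l \<ominus> z (Suc i)) = l"
      using l(1) zc by (simp add: a_minus_simps)
    then show ?thesis
      using avoid[OF l(3)] by metis
  qed
  ultimately show ?thesis
    by blast
qed

end

end

section \<open>Strict homomorphisms and open maps\<close>

locale complete_td_group_hom = M: complete_td_group M TM + N: complete_td_group N TN
  for M (structure) and TM and N and TN +
  fixes f
  assumes map_closed: "\<And>x. x \<in> carrier M \<Longrightarrow> f x \<in> carrier N"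
    and map_add: "\<And>x y. x \<in> carrier M \<Longrightarrow> y \<in> carrier M \<Longrightarrow> f (x \<oplus> y) = f x \<oplus>\<^bsub>N\<^esub> f y"
    and continuous: "continuous_map TM TN f"
begin

sublocale H: abelian_group_hom M N f
  by (intro abelian_group_homI M.abelian_group_axioms N.abelian_group_axioms group_hom.intro
      M.a_group N.a_group group_hom_axioms.intro homI) (auto simp: map_closed map_add)

lemma hom_minus [simp]: "x \<in> carrier M \<Longrightarrow> y \<in> carrier M \<Longrightarrow> f (x \<ominus> y) = f x \<ominus>\<^bsub>N\<^esub> f y"
  by (simp add: a_minus_def)

lemma image_additive_subgroup:
  assumes "additive_subgroup H M"
  shows "additive_subgroup (f ` H) N"
proof -
  interpret H: additive_subgroup H M by fact
  show ?thesis
  proof (rule N.additive_subgroup_minusI)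
    show "f ` H \<subseteq> carrier N" "\<zero>\<^bsub>N\<^esub> \<in> f ` H"
      using H.a_subset H.zero_closed H.hom_zero by (force, metis image_eqI)
    fix u v assume "u \<in> f ` H" "v \<in> f ` H"
    then obtain a b where "a \<in> H" "b \<in> H" "u = f a" "v = f b"
      by blast
    then show "u \<ominus>\<^bsub>N\<^esub> v \<in> f ` H"
      using H.a_subset H.a_minus_closed[of a b] hom_minus[of a b] by force
  qed
qed

lemma kernel_coset_eq_fibre:
  assumes x: "x \<in> carrier M"
  shows "a_kernel M N f +> x = {y \<in> carrier M. f y = f x}"
proof
  show "a_kernel M N f +> x \<subseteq> {y \<in> carrier M. f y = f x}"
  proof
    fix y assume "y \<in> a_kernel M N f +> x"
    then obtain h where "h \<in> carrier M" "f h = \<zero>\<^bsub>N\<^esub>" "y = h \<oplus> x"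
      unfolding a_r_coset_def' a_kernel_def' by blast
    then show "y \<in> {y \<in> carrier M. f y = f x}"
      using x by (simp add: N.l_zero)
  qed
  show "{y \<in> carrier M. f y = f x} \<subseteq> a_kernel M N f +> x"
  proof (rule subsetI, elim CollectE conjE)
    fix y assume y: "y \<in> carrier M" "f y = f x"
    have "f (y \<ominus> x) = \<zero>\<^bsub>N\<^esub>"
      using hom_minus[OF y(1) x] N.a_minus_self[OF map_closed[OF x]] y(2) by simp
    then have "y \<ominus> x \<in> a_kernel M N f"
      using x y(1) unfolding a_kernel_def' by blast
    moreover have "y = (y \<ominus> x) \<oplus> x"
      using x y(1) by (simp add: M.a_minus_simps)
    ultimately show "y \<in> a_kernel M N f +> x"
      unfolding a_r_coset_def' by blast
  qed
qed

lemma A_RCOSETS_kernel_eq_fibres: "A_RCOSETS M (a_kernel M N f) = fibres TM f"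
  by (simp add: A_RCOSETS_def' fibres_def M.topspace_eq kernel_coset_eq_fibre) blast

lemma openin_saturation:
  assumes U: "openin TM U"
  shows "openin TM {x \<in> topspace TM. f x \<in> f ` U}"
proof -
  have Uc: "U \<subseteq> carrier M"
    using openin_subset[OF U] by (simp add: M.topspace_eq)
  have "{x \<in> topspace TM. f x \<in> f ` U} = (\<Union>k\<in>a_kernel M N f. {x \<in> carrier M. x \<ominus> k \<in> U})"
  proof safe
    fix x u assume x: "x \<in> topspace TM" and u: "u \<in> U" and fx: "f x = f u"
    have xc: "x \<in> carrier M" and uc: "u \<in> carrier M"
      using x u Uc by (auto simp: M.topspace_eq)
    have "f (x \<ominus> u) = \<zero>\<^bsub>N\<^esub>"
      using hom_minus[OF xc uc] N.a_minus_self[OF map_closed[OF uc]] fx by simp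
    then have "x \<ominus> u \<in> a_kernel M N f"
      using xc uc unfolding a_kernel_def' by blast
    moreover have "x \<ominus> (x \<ominus> u) = u"
      using xc uc by (simp add: M.a_minus_simps)
    ultimately show "x \<in> (\<Union>k\<in>a_kernel M N f. {x \<in> carrier M. x \<ominus> k \<in> U})"
      using xc u by (intro UN_I[of "x \<ominus> u"]) auto
  next
    fix x k assume x: "x \<in> carrier M" and k: "k \<in> a_kernel M N f" and "x \<ominus> k \<in> U"
    have kc: "k \<in> carrier M" and fk: "f k = \<zero>\<^bsub>N\<^esub>"
      using k unfolding a_kernel_def' by auto
    have "f (x \<ominus> k) = f x"
      using hom_minus[OF x kc] N.a_minus_zero[OF map_closed[OF x]] fk by simp
    with \<open>x \<ominus> k \<in> U\<close> show "f x \<in> f ` U"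
      by (metis image_eqI)
  qed (simp add: M.topspace_eq)
  moreover have "openin TM {x \<in> carrier M. x \<ominus> k \<in> U}" if "k \<in> a_kernel M N f" for k
    using that M.openin_minus_preimage[OF U] unfolding a_kernel_def' by blast
  ultimately show ?thesis
    by (auto intro: openin_Union)
qed

lemma quotient_map_iff_open_map:
  "quotient_map TM (subtopology TN (f ` carrier M)) f \<longleftrightarrow> open_map TM (subtopology TN (f ` carrier M)) f"
proof
  assume "quotient_map TM (subtopology TN (f ` carrier M)) f"
  then have saturated_open: "\<And>S. openin TM S \<Longrightarrow> {x \<in> topspace TM. f x \<in> f ` S} \<subseteq> S \<Longrightarrow>
      openin (subtopology TN (f ` carrier M)) (f ` S)"
    unfolding quotient_map_saturated_open by blast
  show "open_map TM (subtopology TN (f ` carrier M)) f"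
    unfolding open_map_def
  proof (intro allI impI)
    fix U assume U: "openin TM U"
    let ?S = "{x \<in> topspace TM. f x \<in> f ` U}"
    have "{x \<in> topspace TM. f x \<in> f ` ?S} \<subseteq> ?S"
      by auto
    then have "openin (subtopology TN (f ` carrier M)) (f ` ?S)"
      by (rule saturated_open[OF openin_saturation[OF U]])
    moreover have "f ` ?S = f ` U"
      using openin_subset[OF U] by auto
    ultimately show "openin (subtopology TN (f ` carrier M)) (f ` U)"
      by simp
  qed
next
  assume om: "open_map TM (subtopology TN (f ` carrier M)) f"
  have cm: "continuous_map TM (subtopology TN (f ` carrier M)) f"
    using continuous by (simp add: continuous_map_in_subtopology M.topspace_eq)
  have surj: "f ` topspace TM = topspace (subtopology TN (f ` carrier M))"
    using map_closed by (auto simp: M.topspace_eq N.topspace_eq)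
  show "quotient_map TM (subtopology TN (f ` carrier M)) f"
    by (rule continuous_open_imp_quotient_map[OF cm om surj])
qed

section \<open>The open mapping theorem\<close>

context
  fixes W assumes W: "N.subgroup_nhds_basis W"
begin

lemma image_nhds_in_closure_if_closedin:
  assumes closed: "closedin TN (f ` carrier M)" and H: "openin TM H" "additive_subgroup H M"
  shows "\<exists>k. f ` carrier M \<inter> W k \<subseteq> TN closure_of (f ` H)"
proof (rule ccontr)
  let ?D = "TN closure_of (f ` H)"
  assume "\<not> (\<exists>k. f ` carrier M \<inter> W k \<subseteq> ?D)"
  then have thin: "\<not> f ` carrier M \<inter> W k \<subseteq> ?D" for k
    by (simp only: not_ex not_False_eq_True)
  obtain a :: "nat \<Rightarrow> 'a" where a: "\<And>i. a i \<in> carrier M" and cover: "\<And>x. x \<in> carrier M \<Longrightarrow> \<exists>i. x \<ominus> a i \<in> H"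
    using M.countable_cosets[OF H] by blast
  have D: "closedin TN ?D" "additive_subgroup ?D N"
    using N.additive_subgroup_closure_of[OF image_additive_subgroup[OF H(2)]] by simp_all
  have L: "additive_subgroup (f ` carrier M) N"
    by (rule image_additive_subgroup[OF M.additive_subgroup_carrier])
  obtain z where "z \<in> f ` carrier M" and z: "\<And>i. z \<ominus>\<^bsub>N\<^esub> f (a i) \<notin> ?D"
    using N.closed_subgroup_not_covered_by_cosets[OF W closed L D thin, of "\<lambda>i. f (a i)"] a by blast
  then obtain x where x: "x \<in> carrier M" "z = f x"
    by blast
  obtain i where i: "x \<ominus> a i \<in> H"
    using cover[OF x(1)] by blast
  have "f ` H \<subseteq> topspace TN"
    using additive_subgroup.a_subset[OF H(2)] map_closed by (auto simp: N.topspace_eq)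
  then have "f (x \<ominus> a i) \<in> ?D"
    using closure_of_subset i by blast
  moreover have "f (x \<ominus> a i) = z \<ominus>\<^bsub>N\<^esub> f (a i)"
    using hom_minus[OF x(1) a] x(2) by simp
  ultimately show False
    using z by simp
qed

lemma preimage_of_limit:
  assumes V': "M.subgroup_nhds_basis V'"
    and s: "\<And>n. s n \<in> carrier M" "\<And>n. s (Suc n) \<ominus> s n \<in> V' n"
    and y: "y \<in> carrier N" "\<And>n. f (s n) \<ominus>\<^bsub>N\<^esub> y \<in> W n"
  shows "\<exists>x\<in>carrier M. f x = y \<and> x \<ominus> s 0 \<in> V' 0"
proof -
  obtain x where x: "x \<in> carrier M" "limitin TM s x sequentially" "x \<ominus> s 0 \<in> V' 0"
    using M.basis_steps_converge[OF V' s] by blast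
  have "limitin TN (\<lambda>n. f (s n)) (f x) sequentially"
    using continuous_map_limit[OF continuous x(2)] by (simp add: o_def)
  moreover have "limitin TN (\<lambda>n. f (s n)) y sequentially"
    unfolding N.limitin_iff_basis[OF W y(1) map_closed[OF s(1)]]
  proof
    fix n
    have "f (s m) \<ominus>\<^bsub>N\<^esub> y \<in> W n" if "n \<le> m" for m
      using y(2)[of m] N.basis_antimono[OF W that] by blast
    then show "\<forall>\<^sub>F m in sequentially. f (s m) \<ominus>\<^bsub>N\<^esub> y \<in> W n"
      unfolding eventually_sequentially by blast
  qed
  ultimately have "f x = y"
    using limitin_Hausdorff_unique trivial_limit_sequentially N.Hausdorff by metis
  with x show ?thesis
    by blast
qed

lemma basis_if_open_map:
  assumes "open_map TM (subtopology TN (f ` carrier M)) f" "openin TM H" "\<zero> \<in> H"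
  shows "\<exists>k. f ` carrier M \<inter> W k \<subseteq> f ` H"
proof -
  have "openin (subtopology TN (f ` carrier M)) (f ` H)"
    using assms(1,2) unfolding open_map_def by blast
  then obtain U where U: "openin TN U" "f ` H = U \<inter> f ` carrier M"
    unfolding openin_subtopology by blast
  have "f \<zero> \<in> f ` H"
    using assms(3) by (rule imageI)
  then have "\<zero>\<^bsub>N\<^esub> \<in> U"
    using U(2) by simp
  then obtain k where "W k \<subseteq> U"
    using N.basis_nhds[OF W U(1)] by blast
  then show ?thesis
    using U(2) by blast
qed

lemma lift_difference:
  assumes lift: "f ` carrier M \<inter> W k \<subseteq> f ` H" and H: "H \<subseteq> carrier M"
    and x: "x \<in> carrier M" and z: "z \<in> carrier M" and near: "f z \<ominus>\<^bsub>N\<^esub> f x \<in> W k"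
  shows "\<exists>v\<in>H. f (x \<oplus> v) = f z"
proof -
  have "f (z \<ominus> x) \<in> f ` carrier M \<inter> W k"
    using x z near hom_minus[OF z x] by (intro IntI imageI) simp_all
  then obtain v where v: "v \<in> H" "f v = f (z \<ominus> x)"
    using lift by (metis imageE subsetD)
  have "f (x \<oplus> v) = f x \<oplus>\<^bsub>N\<^esub> (f z \<ominus>\<^bsub>N\<^esub> f x)"
    using v H x z by (simp add: subsetD)
  also have "\<dots> = f z"
    using x z by (simp add: N.a_minus_simps)
  finally show ?thesis
    using v(1) by (rule bexI)
qed

lemma approximation_step:
  assumes dense: "f ` carrier M \<inter> W k \<subseteq> TN closure_of (f ` H)" and H: "H \<subseteq> carrier M"
    and y: "y \<in> f ` carrier M" and s: "s \<in> carrier M" and near: "y \<ominus>\<^bsub>N\<^esub> f s \<in> W k"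
  shows "\<exists>v\<in>H. y \<ominus>\<^bsub>N\<^esub> f (s \<oplus> v) \<in> W m"
proof -
  obtain y0 where y0: "y0 \<in> carrier M" "y = f y0"
    using y by blast
  have "y \<ominus>\<^bsub>N\<^esub> f s \<in> f ` carrier M"
    using y0 s hom_minus[OF y0(1) s] by (metis M.minus_closed imageI)
  then have "y \<ominus>\<^bsub>N\<^esub> f s \<in> TN closure_of (f ` H)"
    using dense near by blast
  moreover have "f ` H \<subseteq> carrier N"
    by (intro image_subsetI map_closed subsetD[OF H])
  ultimately have "\<exists>u\<in>f ` H. u \<ominus>\<^bsub>N\<^esub> (y \<ominus>\<^bsub>N\<^esub> f s) \<in> W m"
    by (simp add: N.closure_of_iff_basis[OF W])
  then obtain v where v: "v \<in> H" "f v \<ominus>\<^bsub>N\<^esub> (y \<ominus>\<^bsub>N\<^esub> f s) \<in> W m"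
    by auto
  have "y \<ominus>\<^bsub>N\<^esub> f (s \<oplus> v) = \<ominus>\<^bsub>N\<^esub> (f v \<ominus>\<^bsub>N\<^esub> (y \<ominus>\<^bsub>N\<^esub> f s))"
    using v(1) H y0 s by (simp add: subsetD N.a_minus_simps)
  then have "y \<ominus>\<^bsub>N\<^esub> f (s \<oplus> v) \<in> W m"
    using additive_subgroup.a_inv_closed[OF N.basis_subgroup[OF W] v(2)] by simp
  with v(1) show ?thesis
    by (rule bexI[rotated])
qed

end

context
  fixes V W assumes V: "M.subgroup_nhds_basis V" and W: "N.subgroup_nhds_basis W"
begin

lemma open_map_if_basis:
  assumes basis: "\<And>j. \<exists>k. f ` carrier M \<inter> W k \<subseteq> f ` V j"
  shows "open_map TM (subtopology TN (f ` carrier M)) f"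
  unfolding open_map_def
proof (intro allI impI)
  fix S assume S: "openin TM S"
  show "openin (subtopology TN (f ` carrier M)) (f ` S)"
  proof (subst openin_subopen, intro ballI)
    fix y assume "y \<in> f ` S"
    then obtain x where x: "x \<in> S" "y = f x"
      by blast
    have xc: "x \<in> carrier M"
      using openin_subset[OF S] x(1) by (auto simp: M.topspace_eq)
    have "openin TM {z \<in> carrier M. x \<oplus> z \<in> S}" "\<zero> \<in> {z \<in> carrier M. x \<oplus> z \<in> S}"
      using M.openin_add_left_preimage[OF S xc] xc x(1) by simp_all
    then obtain j where j: "V j \<subseteq> {z \<in> carrier M. x \<oplus> z \<in> S}"
      using M.basis_nhds[OF V] by blast
    obtain k where k: "f ` carrier M \<inter> W k \<subseteq> f ` V j"
      using basis by blast
    let ?T = "{u \<in> carrier N. u \<ominus>\<^bsub>N\<^esub> f x \<in> W k} \<inter> f ` carrier M"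
    have "openin (subtopology TN (f ` carrier M)) ?T"
      using N.openin_minus_preimage[OF N.basis_openin[OF W] map_closed[OF xc]]
      unfolding openin_subtopology by blast
    moreover have "y \<in> ?T"
      using x(2) xc N.basis_zero[OF W] by simp
    moreover have "?T \<subseteq> f ` S"
    proof
      fix u assume u: "u \<in> ?T"
      then obtain z where z: "z \<in> carrier M" "u = f z"
        by blast
      then obtain v where "v \<in> V j" "f (x \<oplus> v) = u"
        using lift_difference[OF W k M.basis_subset[OF V] xc z(1)] u by auto
      then show "u \<in> f ` S"
        using j by (metis (mono_tags, lifting) CollectD image_eqI subsetD)
    qed
    ultimately show "\<exists>T. openin (subtopology TN (f ` carrier M)) T \<and> y \<in> T \<and> T \<subseteq> f ` S"
      by blast
  qed
qed

lemma limit_of_images_in_image: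
  assumes lift: "\<And>j. f ` carrier M \<inter> W (kf j) \<subseteq> f ` V j"
    and yc: "y \<in> carrier N" and near: "\<And>n. \<exists>x\<in>carrier M. f x \<ominus>\<^bsub>N\<^esub> y \<in> W n"
  shows "y \<in> f ` carrier M"
proof -
  (* W (K n) lies in W n and in W (kf n), so consecutive approximations differ by the image of
     an element of V n. *)
  define K where "K n = max n (kf n)" for n
  have "\<exists>s. \<forall>n. (s n \<in> carrier M \<and> f (s n) \<ominus>\<^bsub>N\<^esub> y \<in> W (K n)) \<and> s (Suc n) \<ominus> s n \<in> V n"
  proof (rule dependent_nat_choice)
    show "\<exists>s. s \<in> carrier M \<and> f s \<ominus>\<^bsub>N\<^esub> y \<in> W (K 0)"
      using near by blast
  next
    fix s n assume s: "s \<in> carrier M \<and> f s \<ominus>\<^bsub>N\<^esub> y \<in> W (K n)"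
    obtain x where x: "x \<in> carrier M" "f x \<ominus>\<^bsub>N\<^esub> y \<in> W (max (K (Suc n)) (kf n))"
      using near by blast
    have "W (max (K (Suc n)) (kf n)) \<subseteq> W (K (Suc n))" "W (max (K (Suc n)) (kf n)) \<subseteq> W (kf n)"
      "W (K n) \<subseteq> W (kf n)"
      by (simp_all add: N.basis_antimono[OF W] K_def)
    then have "f x \<ominus>\<^bsub>N\<^esub> y \<in> W (K (Suc n))"
      and "(f x \<ominus>\<^bsub>N\<^esub> y) \<ominus>\<^bsub>N\<^esub> (f s \<ominus>\<^bsub>N\<^esub> y) \<in> W (kf n)"
      using x(2) s N.basis_minus_closed[OF W] by blast+
    moreover have "(f x \<ominus>\<^bsub>N\<^esub> y) \<ominus>\<^bsub>N\<^esub> (f s \<ominus>\<^bsub>N\<^esub> y) = f x \<ominus>\<^bsub>N\<^esub> f s"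
      using x(1) s yc by (simp add: N.a_minus_simps)
    ultimately obtain v where v: "v \<in> V n" "f (s \<oplus> v) = f x"
      using lift_difference[OF W lift M.basis_subset[OF V]] x(1) s by metis
    moreover have vc: "v \<in> carrier M"
      using v(1) M.basis_subset[OF V] by blast
    moreover have "(s \<oplus> v) \<ominus> s = v"
      using s vc by (simp add: M.a_minus_simps)
    ultimately show "\<exists>s'. (s' \<in> carrier M \<and> f s' \<ominus>\<^bsub>N\<^esub> y \<in> W (K (Suc n))) \<and> s' \<ominus> s \<in> V n"
      using \<open>f x \<ominus>\<^bsub>N\<^esub> y \<in> W (K (Suc n))\<close> s
      by (intro exI[of _ "s \<oplus> v"]) auto
  qed
  then obtain s where s: "\<And>n. s n \<in> carrier M" "\<And>n. f (s n) \<ominus>\<^bsub>N\<^esub> y \<in> W (K n)"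
    and step: "\<And>n. s (Suc n) \<ominus> s n \<in> V n"
    by blast
  have "f (s n) \<ominus>\<^bsub>N\<^esub> y \<in> W n" for n
    using s(2) N.basis_antimono[OF W, of n "K n"] by (auto simp: K_def)
  then show ?thesis
    using preimage_of_limit[OF W V s(1) step yc] by (metis imageI)
qed

lemma closedin_if_basis:
  assumes basis: "\<And>j. \<exists>k. f ` carrier M \<inter> W k \<subseteq> f ` V j"
  shows "closedin TN (f ` carrier M)"
proof -
  obtain kf where kf: "\<And>j. f ` carrier M \<inter> W (kf j) \<subseteq> f ` V j"
    using basis by metis
  have L: "f ` carrier M \<subseteq> carrier N"
    using map_closed by auto
  have "TN closure_of (f ` carrier M) \<subseteq> f ` carrier M"
  proof
    fix y assume "y \<in> TN closure_of (f ` carrier M)"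
    then have "y \<in> carrier N" "\<And>n. \<exists>x\<in>carrier M. f x \<ominus>\<^bsub>N\<^esub> y \<in> W n"
      unfolding N.closure_of_iff_basis[OF W L] by auto
    then show "y \<in> f ` carrier M"
      by (rule limit_of_images_in_image[OF kf])
  qed
  then show ?thesis
    using L closure_of_subset_eq by (metis N.topspace_eq)
qed

lemma approximating_sequence:
  assumes dense: "\<And>j. f ` carrier M \<inter> W (k j) \<subseteq> TN closure_of (f ` V j)"
    and y: "y \<in> f ` carrier M \<inter> W (k j)"
  shows "\<exists>s. \<forall>i. s i \<in> V j \<and> y \<ominus>\<^bsub>N\<^esub> f (s i) \<in> W i \<and> s (Suc i) \<ominus> s i \<in> V (j + i)"
proof -
  have yL: "y \<in> f ` carrier M" and yc: "y \<in> carrier N"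
    using y by auto
  (* W (K i) lies in W i and in W (k (j + i)), where f (V (j + i)) is dense. *)
  define K where "K i = max (k (j + i)) i" for i
  have "\<exists>s. \<forall>i. (s i \<in> V j \<and> y \<ominus>\<^bsub>N\<^esub> f (s i) \<in> W (K i)) \<and> s (Suc i) \<ominus> s i \<in> V (j + i)"
  proof (rule dependent_nat_choice)
    show "\<exists>s. s \<in> V j \<and> y \<ominus>\<^bsub>N\<^esub> f s \<in> W (K 0)"
      using M.basis_zero[OF V] y yc by (intro exI[of _ \<zero>]) (simp add: K_def)
  next
    fix s i assume s: "s \<in> V j \<and> y \<ominus>\<^bsub>N\<^esub> f s \<in> W (K i)"
    have sc: "s \<in> carrier M"
      using s M.basis_subset[OF V] by blast
    have "W (K i) \<subseteq> W (k (j + i))"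
      by (simp add: N.basis_antimono[OF W] K_def)
    then obtain v where v: "v \<in> V (j + i)" "y \<ominus>\<^bsub>N\<^esub> f (s \<oplus> v) \<in> W (K (Suc i))"
      using approximation_step[OF W dense M.basis_subset[OF V] yL sc] s by blast
    have vc: "v \<in> carrier M"
      using v(1) M.basis_subset[OF V] by blast
    have "s \<oplus> v \<in> V j"
      using s v(1) M.basis_antimono[OF V, of j "j + i"]
      by (simp add: additive_subgroup.a_closed[OF M.basis_subgroup[OF V]] subset_iff)
    moreover have "(s \<oplus> v) \<ominus> s = v"
      using sc vc by (simp add: M.a_minus_simps)
    ultimately show "\<exists>s'. (s' \<in> V j \<and> y \<ominus>\<^bsub>N\<^esub> f s' \<in> W (K (Suc i))) \<and> s' \<ominus> s \<in> V (j + i)"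
      using v by (intro exI[of _ "s \<oplus> v"]) simp
  qed
  moreover have "W (K i) \<subseteq> W i" for i
    by (simp add: N.basis_antimono[OF W] K_def)
  ultimately show ?thesis
    by blast
qed

lemma basis_if_closure_basis:
  assumes dense: "\<And>j. f ` carrier M \<inter> W (k j) \<subseteq> TN closure_of (f ` V j)"
  shows "f ` carrier M \<inter> W (k j) \<subseteq> f ` V j"
proof
  fix y assume y: "y \<in> f ` carrier M \<inter> W (k j)"
  then have yc: "y \<in> carrier N"
    by auto
  obtain s where s: "\<And>i. s i \<in> V j" "\<And>i. y \<ominus>\<^bsub>N\<^esub> f (s i) \<in> W i"
    and step: "\<And>i. s (Suc i) \<ominus> s i \<in> V (j + i)"
    using approximating_sequence[OF dense y] by blast
  have sc: "s i \<in> carrier M" for i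
    using s(1) M.basis_subset[OF V] by blast
  have "f (s i) \<ominus>\<^bsub>N\<^esub> y \<in> W i" for i
  proof -
    have "f (s i) \<ominus>\<^bsub>N\<^esub> y = \<ominus>\<^bsub>N\<^esub> (y \<ominus>\<^bsub>N\<^esub> f (s i))"
      using yc sc by (simp add: N.a_minus_simps)
    then show ?thesis
      using additive_subgroup.a_inv_closed[OF N.basis_subgroup[OF W] s(2)] by simp
  qed
  moreover have V': "M.subgroup_nhds_basis (\<lambda>i. V (j + i))"
    by (rule M.basis_reindex[OF V]) simp_all
  ultimately obtain x where x: "x \<in> carrier M" "f x = y" "x \<ominus> s 0 \<in> V j"
    using preimage_of_limit[OF W V' sc step yc] by auto
  have "x = (x \<ominus> s 0) \<oplus> s 0"
    using x(1) sc by (simp add: M.a_minus_simps)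
  then have "x \<in> V j"
    using additive_subgroup.a_closed[OF M.basis_subgroup[OF V] x(3) s(1)[of 0]] by simp
  with x(2) show "y \<in> f ` V j"
    by blast
qed

end

lemma open_map_iff_closedin:
  "open_map TM (subtopology TN (f ` carrier M)) f \<longleftrightarrow> closedin TN (f ` carrier M)"
proof -
  obtain V W where V: "M.subgroup_nhds_basis V" and W: "N.subgroup_nhds_basis W"
    using M.subgroup_nhds_basis_exists N.subgroup_nhds_basis_exists by blast
  show ?thesis
  proof
    assume "open_map TM (subtopology TN (f ` carrier M)) f"
    then show "closedin TN (f ` carrier M)"
      using closedin_if_basis[OF V W] basis_if_open_map[OF W] M.basis_openin[OF V] M.basis_zero[OF V]
      by blast
  next
    assume closed: "closedin TN (f ` carrier M)"
    obtain k where "\<And>j. f ` carrier M \<inter> W (k j) \<subseteq> TN closure_of (f ` V j)"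
      using image_nhds_in_closure_if_closedin[OF W closed M.basis_openin[OF V] M.basis_subgroup[OF V]]
      by metis
    then show "open_map TM (subtopology TN (f ` carrier M)) f"
      using open_map_if_basis[OF V W] basis_if_closure_basis[OF V W] by blast
  qed
qed

end

lemma complete_td_module_imp_complete_td_group:
  assumes "complete_td_module R TR M TM"
  shows "complete_td_group M TM"
proof -
  have module: "left_module R M" and topspace: "topspace TM = carrier M"
    and add: "continuous_map (prod_topology TM TM) TM (\<lambda>(x, y). x \<oplus>\<^bsub>M\<^esub> y)"
    and Hausdorff: "Hausdorff_space TM" and complete: "complete_top_group M TM"
    and submodules: "\<And>U. openin TM U \<Longrightarrow> \<zero>\<^bsub>M\<^esub> \<in> U \<Longrightarrow> \<exists>H. openin TM H \<and> submodule H R M \<and> H \<subseteq> U"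
    and countable: "second_countable TM"
    using assms unfolding complete_td_module_def topological_module_def by blast+
  have "abelian_group M"
    using module unfolding left_module_def by blast
  moreover have "\<exists>H. openin TM H \<and> additive_subgroup H M \<and> H \<subseteq> U"
    if "openin TM U" "\<zero>\<^bsub>M\<^esub> \<in> U" for U
    using submodules[OF that] additive_subgroupI submodule.axioms(1) by metis
  ultimately show ?thesis
    using topspace add Hausdorff complete countable
    by (intro complete_td_group.intro complete_td_group_axioms.intro)
qed

theorem proposition1p1:
  fixes R :: "('r, 'x) ring_scheme" and TR :: "'r topology"
    and M :: "('r, 'm) module" and TM :: "'m topology"
    and N :: "('r, 'n) module" and TN :: "'n topology"
    and f :: "'m \<Rightarrow> 'n"
  assumes "topological_ring R TR" and "compact_space TR" and "Hausdorff_space TR"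
    and "first_countable TR"
    and "complete_td_module R TR M TM" and "complete_td_module R TR N TN"
    and "lmodule_hom R M N f" and "continuous_map TM TN f"
  shows "strict_hom M TM N TN f \<longleftrightarrow> closedin TN (f ` carrier M)"
proof -
  interpret complete_td_group_hom M TM N TN f
    using complete_td_module_imp_complete_td_group[OF assms(5)]
      complete_td_module_imp_complete_td_group[OF assms(6)] assms(7,8)
    unfolding lmodule_hom_def
    by (intro complete_td_group_hom.intro complete_td_group_hom_axioms.intro) auto
  have "strict_hom M TM N TN f \<longleftrightarrow> quotient_map TM (subtopology TN (f ` carrier M)) f"
    unfolding strict_hom_def A_RCOSETS_kernel_eq_fibres by (rule homeomorphic_map_fibres_iff_quotient_map)
  also have "\<dots> \<longleftrightarrow> open_map TM (subtopology TN (f ` carrier M)) f"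
    by (rule quotient_map_iff_open_map)
  also have "\<dots> \<longleftrightarrow> closedin TN (f ` carrier M)"
    by (rule open_map_iff_closedin)
  finally show ?thesis .
qed

end
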